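(* Suppose $A,B\in M_N(\mathbb C)$ are simultaneously diagonalizable, with a common basis of eigenvectors $v_1,\dots,v_N$, $Av_i=\lambda_iv_i$, $Bv_i=\gamma_iv_i$, all $\lambda_i$ real and positive, and put $\mu_i=\gamma_i/\lambda_i$. If $|\mu_i|<1$ for every $i=1,\dots,N$, then for every $\theta\in(1/2,1]$ the $\theta$-method with $u=0$ is unconditionally stable, i.e. stable for every step size $h=\tau/m$, $m\in\mathbb N$.
   Context: Let $\tau>0$ and consider $y'(t)=-Ay(t)+By(t-\tau)$. For $u=0$, $\theta\in[0,1]$, $m\in\mathbb N$ and $h=\tau/m$, the $\theta$-method is the recursion, for $n\ge0$ and arbitrary starting values $y_{-m},\dots,y_0\in\mathbb C^N$, $$y_{n+1}=y_n+h(1-\theta)\big[-Ay_n+By_{n-m}\big]+h\theta\big[-Ay_{n+1}+By_{n-m+1}\big].$$ It is called stable (for that $h$) if $y_n\to0$ as $n\to\infty$ for every choice of starting values. *)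

theory Defs
  imports "HOL-Analysis.Analysis"
begin

text \<open>One step of the theta-method (u = 0) for y'(t) = -A y(t) + B y(t - tau), with
  step size h = tau/m.  Sequences are indexed by integers; y (-m), ..., y 0 are the
  starting values and the recursion is required for all n >= 0.\<close>

definition theta_recursion ::
  "complex^'n^'n \<Rightarrow> complex^'n^'n \<Rightarrow> real \<Rightarrow> real \<Rightarrow> nat \<Rightarrow> (int \<Rightarrow> complex^'n) \<Rightarrow> bool"
where
  "theta_recursion A B \<theta> \<tau> m y \<longleftrightarrow>
     (\<forall>n::int. n \<ge> 0 \<longrightarrow>
        y (n + 1) = y n
          + complex_of_real ((\<tau> / real m) * (1 - \<theta>)) *s (- (A *v y n) + B *v y (n - int m))
          + complex_of_real ((\<tau> / real m) * \<theta>) *s (- (A *v y (n + 1)) + B *v y (n - int m + 1)))"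

definition theta_stable ::
  "complex^'n^'n \<Rightarrow> complex^'n^'n \<Rightarrow> real \<Rightarrow> real \<Rightarrow> nat \<Rightarrow> bool"
where
  "theta_stable A B \<theta> \<tau> m \<longleftrightarrow>
     (\<forall>y. theta_recursion A B \<theta> \<tau> m y \<longrightarrow> (\<lambda>n::nat. y (int n)) \<longlonglongrightarrow> 0)"

end

theory Submission
  imports Defs
begin

text \<open>In the common eigenbasis the method decouples into scalar recursions
  \<open>c(n+1) - c(n) = h (-\<lambda> w(n) + \<gamma> w(n-m))\<close> with \<open>w(n) = \<theta> c(n+1) + (1-\<theta>) c(n)\<close>.
  Multiplying by \<open>cnj (w n)\<close> and taking real parts gives, for \<open>\<theta> \<ge> 1/2\<close>,
  \<open>|c(n+1)|\<^sup>2 - |c(n)|\<^sup>2 \<le> -h (2\<lambda> - |\<gamma>|) |w(n)|\<^sup>2 + h |\<gamma>| |w(n-m)|\<^sup>2\<close>.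
  Adding \<open>h \<lambda>\<close> times the sum of the last \<open>m\<close> values of \<open>|w|\<^sup>2\<close> yields a Lyapunov
  functional that decreases by \<open>h (\<lambda> - |\<gamma>|) |w(n)|\<^sup>2\<close> per step, so \<open>\<Sum> |w(n)|\<^sup>2 < \<infinity>\<close>.
  Hence \<open>w(n) \<rightarrow> 0\<close>, the increments tend to 0, and so does \<open>c(n) = w(n) - \<theta> (c(n+1) - c(n))\<close>.\<close>

lemma Re_diff_mult_cnj_convex_comb:
  fixes a b :: complex and t :: real
  shows "Re ((b - a) * cnj (of_real t * b + of_real (1 - t) * a)) =
    ((cmod b)\<^sup>2 - (cmod a)\<^sup>2) / 2 + (t - 1/2) * (cmod (b - a))\<^sup>2"
  unfolding cmod_power2 by (simp add: power2_eq_square field_simps)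

lemma Re_mult_mult_cnj_le:
  fixes g z w :: complex
  shows "Re (g * z * cnj w) \<le> cmod g / 2 * ((cmod z)\<^sup>2 + (cmod w)\<^sup>2)"
proof -
  have "Re (g * z * cnj w) \<le> cmod g * (cmod z * cmod w)"
    using complex_Re_le_cmod by (metis complex_mod_cnj norm_mult mult.assoc)
  also have "\<dots> \<le> cmod g * (((cmod z)\<^sup>2 + (cmod w)\<^sup>2) / 2)"
  proof (intro mult_left_mono)
    have "0 \<le> (cmod z - cmod w)\<^sup>2" by simp
    then show "cmod z * cmod w \<le> ((cmod z)\<^sup>2 + (cmod w)\<^sup>2) / 2"
      by (simp add: power2_eq_square algebra_simps)
  qed simp
  finally show ?thesis by simp
qed

definition scalar_theta_recursion ::
  "real \<Rightarrow> complex \<Rightarrow> real \<Rightarrow> real \<Rightarrow> nat \<Rightarrow> (int \<Rightarrow> complex) \<Rightarrow> bool"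
where
  "scalar_theta_recursion lam g t h m c \<longleftrightarrow>
     (\<forall>n::int. n \<ge> 0 \<longrightarrow>
        c (n + 1) = c n
          + of_real (h * (1 - t)) * (- (of_real lam * c n) + g * c (n - int m))
          + of_real (h * t) * (- (of_real lam * c (n + 1)) + g * c (n - int m + 1)))"

locale scalar_theta_method =
  fixes lam :: real and g :: complex and t h :: real and m :: nat and c :: "int \<Rightarrow> complex"
  assumes step_pos: "h > 0"
    and delay_dominated: "cmod g < lam"
    and theta_ge: "1/2 \<le> t"
    and recursion: "scalar_theta_recursion lam g t h m c"
begin

lemma lam_pos: "lam > 0"
  using norm_ge_zero delay_dominated by (rule le_less_trans)

definition w :: "int \<Rightarrow> complex" where
  "w n = of_real t * c (n + 1) + of_real (1 - t) * c n"

definition d :: "int \<Rightarrow> complex" where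
  "d n = c (n + 1) - c n"

lemma d_eq:
  assumes "n \<ge> 0"
  shows "d n = of_real h * (- of_real lam * w n + g * w (n - int m))"
  using recursion[unfolded scalar_theta_recursion_def, rule_format, OF assms]
  by (simp add: d_def w_def algebra_simps)

lemma c_eq: "c n = w n - of_real t * d n"
  by (simp add: w_def d_def algebra_simps)

lemma norm_sq_step:
  assumes "n \<ge> 0"
  shows "(cmod (c (n + 1)))\<^sup>2 - (cmod (c n))\<^sup>2 \<le>
    - h * (2 * lam - cmod g) * (cmod (w n))\<^sup>2 + h * cmod g * (cmod (w (n - int m)))\<^sup>2"
proof -
  have energy: "Re (d n * cnj (w n)) =
      ((cmod (c (n + 1)))\<^sup>2 - (cmod (c n))\<^sup>2) / 2 + (t - 1/2) * (cmod (d n))\<^sup>2"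
    using Re_diff_mult_cnj_convex_comb[of "c (n + 1)" "c n" t] by (simp add: d_def w_def)
  define coupling where "coupling = Re (g * w (n - int m) * cnj (w n))"
  have "d n * cnj (w n) =
      of_real h * (- of_real lam * (w n * cnj (w n)) + g * w (n - int m) * cnj (w n))"
    by (simp add: d_eq[OF assms] algebra_simps)
  also have "w n * cnj (w n) = of_real ((cmod (w n))\<^sup>2)"
    by (rule complex_norm_square[symmetric])
  finally have "((cmod (c (n + 1)))\<^sup>2 - (cmod (c n))\<^sup>2) / 2 + (t - 1/2) * (cmod (d n))\<^sup>2 =
      h * (- lam * (cmod (w n))\<^sup>2 + coupling)"
    by (simp add: energy[symmetric] coupling_def)
  moreover have "h * coupling \<le> h * (cmod g / 2 * ((cmod (w (n - int m)))\<^sup>2 + (cmod (w n))\<^sup>2))"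
    unfolding coupling_def using step_pos by (intro mult_left_mono Re_mult_mult_cnj_le) simp
  moreover have "0 \<le> (t - 1/2) * (cmod (d n))\<^sup>2"
    using theta_ge by simp
  ultimately show ?thesis
    by (simp add: field_simps)
qed

definition lyapunov :: "int \<Rightarrow> real" where
  "lyapunov n = (cmod (c n))\<^sup>2 + h * lam * (\<Sum>j<m. (cmod (w (n - int m + int j)))\<^sup>2)"

lemma lyapunov_nonneg: "lyapunov n \<ge> 0"
  using step_pos lam_pos unfolding lyapunov_def
  by (intro add_nonneg_nonneg mult_nonneg_nonneg sum_nonneg) simp_all

lemma lyapunov_step:
  assumes "n \<ge> 0"
  shows "lyapunov (n + 1) \<le> lyapunov n - h * (lam - cmod g) * (cmod (w n))\<^sup>2"
proof -
  define F where "F j = (cmod (w (n - int m + int j)))\<^sup>2" for j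
  have "(\<Sum>j<m. F (Suc j)) + F 0 = (\<Sum>j<m. F j) + F m"
    using sum.lessThan_Suc_shift[of F m] by simp
  moreover have "(\<Sum>j<m. (cmod (w (n + 1 - int m + int j)))\<^sup>2) = (\<Sum>j<m. F (Suc j))"
    by (simp add: F_def algebra_simps)
  ultimately have window_shift: "lyapunov (n + 1) =
      (cmod (c (n + 1)))\<^sup>2 + h * lam * ((\<Sum>j<m. F j) + (cmod (w n))\<^sup>2 - (cmod (w (n - int m)))\<^sup>2)"
    by (simp add: lyapunov_def F_def)
  have "0 \<le> h * (lam - cmod g) * (cmod (w (n - int m)))\<^sup>2"
    using step_pos delay_dominated by simp
  with norm_sq_step[OF assms] show ?thesis
    unfolding window_shift by (simp add: lyapunov_def F_def algebra_simps)
qed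

lemma lyapunov_telescope:
  "lyapunov (int k) + h * (lam - cmod g) * (\<Sum>j<k. (cmod (w (int j)))\<^sup>2) \<le> lyapunov 0"
proof (induction k)
  case (Suc k)
  have "lyapunov (int (Suc k)) \<le> lyapunov (int k) - h * (lam - cmod g) * (cmod (w (int k)))\<^sup>2"
    using lyapunov_step[of "int k"] by (simp add: add.commute)
  with Suc show ?case
    by (simp add: distrib_left)
qed simp

lemma summable_w: "summable (\<lambda>j. (cmod (w (int j)))\<^sup>2)"
proof (rule summableI_nonneg_bounded)
  fix k
  have K: "h * (lam - cmod g) > 0"
    using step_pos delay_dominated by simp
  have "h * (lam - cmod g) * (\<Sum>j<k. (cmod (w (int j)))\<^sup>2) \<le> lyapunov 0"
    using lyapunov_telescope[of k] lyapunov_nonneg[of "int k"] by linarith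
  with K show "(\<Sum>j<k. (cmod (w (int j)))\<^sup>2) \<le> lyapunov 0 / (h * (lam - cmod g))"
    by (simp add: field_simps)
qed simp

lemma w_tendsto_zero: "(\<lambda>j. w (int j)) \<longlonglongrightarrow> 0"
proof -
  have "(\<lambda>j. sqrt ((cmod (w (int j)))\<^sup>2)) \<longlonglongrightarrow> sqrt 0"
    using summable_LIMSEQ_zero[OF summable_w] by (rule tendsto_real_sqrt)
  then show ?thesis
    by (simp add: tendsto_norm_zero_iff)
qed

lemma c_tendsto_zero: "(\<lambda>n. c (int n)) \<longlonglongrightarrow> 0"
proof -
  have "(\<lambda>j. w (int (j + m) - int m)) \<longlonglongrightarrow> 0"
    using w_tendsto_zero by simp
  then have delayed: "(\<lambda>j. w (int j - int m)) \<longlonglongrightarrow> 0"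
    by (rule LIMSEQ_offset)
  have "(\<lambda>j. of_real h * (- of_real lam * w (int j) + g * w (int j - int m))) \<longlonglongrightarrow> 0"
    using w_tendsto_zero delayed by (auto intro!: tendsto_eq_intros)
  then have "(\<lambda>j. d (int j)) \<longlonglongrightarrow> 0"
    by (simp add: d_eq)
  then have "(\<lambda>j. w (int j) - of_real t * d (int j)) \<longlonglongrightarrow> 0"
    using w_tendsto_zero by (auto intro!: tendsto_eq_intros)
  then show ?thesis
    by (simp add: c_eq)
qed

end

lemma matrix_vector_mult_eigen_columns:
  fixes A :: "'a::comm_ring_1^'n^'n"
  assumes eig: "\<And>j. A *v v j = d j *s v j"
  shows "A *v ((\<chi> i j. v j $ i) *v z) = (\<chi> i j. v j $ i) *v (\<chi> j. d j * z $ j)"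
proof -
  have AP: "(A ** (\<chi> i j. v j $ i)) $ i $ j = d j * v j $ i" for i j
    using arg_cong[OF eig[of j], of "\<lambda>x. x $ i"]
    by (simp add: matrix_matrix_mult_def matrix_vector_mult_def)
  have "((A ** (\<chi> i j. v j $ i)) *v z) $ i = ((\<chi> i j. v j $ i) *v (\<chi> j. d j * z $ j)) $ i" for i
    unfolding matrix_vector_mult_def by (simp add: AP mult_ac)
  then show ?thesis
    by (simp add: matrix_vector_mul_assoc vec_eq_iff)
qed

lemma eigenbasis_coordinate:
  fixes A Q :: "'a::comm_ring_1^'n^'n"
  assumes inverse: "Q ** (\<chi> i j. v j $ i) = mat 1" "(\<chi> i j. v j $ i) ** Q = mat 1"
    and eig: "\<And>j. A *v v j = d j *s v j"
  shows "(Q *v (A *v x)) $ j = d j * (Q *v x) $ j"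
proof -
  have "(\<chi> i j. v j $ i) *v (Q *v x) = x"
    by (simp add: matrix_vector_mul_assoc inverse(2))
  then have "A *v x = (\<chi> i j. v j $ i) *v (\<chi> j. d j * (Q *v x) $ j)"
    using matrix_vector_mult_eigen_columns[of A v d "Q *v x"] eig by simp
  then have "Q *v (A *v x) = (\<chi> j. d j * (Q *v x) $ j)"
    by (simp add: matrix_vector_mul_assoc inverse(1))
  then show ?thesis
    by simp
qed

lemma theta_recursion_coordinate:
  fixes A B Q :: "complex^'n^'n"
  assumes rec: "theta_recursion A B \<theta> \<tau> m y"
    and coordA: "\<And>x. (Q *v (A *v x)) $ i = of_real l * (Q *v x) $ i"
    and coordB: "\<And>x. (Q *v (B *v x)) $ i = g * (Q *v x) $ i"
  shows "scalar_theta_recursion l g \<theta> (\<tau> / real m) m (\<lambda>n. (Q *v y n) $ i)"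
  unfolding scalar_theta_recursion_def
proof (intro allI impI)
  fix n :: int
  assume "n \<ge> 0"
  with rec have "y (n + 1) = y n
      + of_real (\<tau> / real m * (1 - \<theta>)) *s (- (A *v y n) + B *v y (n - int m))
      + of_real (\<tau> / real m * \<theta>) *s (- (A *v y (n + 1)) + B *v y (n - int m + 1))"
    unfolding theta_recursion_def by blast
  then have "(Q *v y (n + 1)) $ i = (Q *v (y n
      + of_real (\<tau> / real m * (1 - \<theta>)) *s (- (A *v y n) + B *v y (n - int m))
      + of_real (\<tau> / real m * \<theta>) *s (- (A *v y (n + 1)) + B *v y (n - int m + 1)))) $ i"
    by (rule arg_cong)
  then show "(Q *v y (n + 1)) $ i = (Q *v y n) $ i
      + of_real (\<tau> / real m * (1 - \<theta>)) * (- (of_real l * (Q *v y n) $ i) + g * (Q *v y (n - int m)) $ i)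
      + of_real (\<tau> / real m * \<theta>) * (- (of_real l * (Q *v y (n + 1)) $ i) + g * (Q *v y (n - int m + 1)) $ i)"
    by (simp only: vec.add vec.scale vec.neg vector_add_component vector_smult_component
        vector_uminus_component coordA coordB)
qed

lemma tendsto_zero_from_coordinates:
  fixes P Q :: "'a::{euclidean_space, real_algebra_1}^'n^'n"
  assumes "P ** Q = mat 1"
    and "\<And>i. (\<lambda>n. (Q *v x n) $ i) \<longlonglongrightarrow> 0"
  shows "x \<longlonglongrightarrow> 0"
proof -
  have "(\<lambda>n. \<chi> i. (Q *v x n) $ i) \<longlonglongrightarrow> (\<chi> i. 0)"
    by (intro tendsto_vec_lambda assms(2))
  then have "(\<lambda>n. Q *v x n) \<longlonglongrightarrow> 0"
    by (simp add: zero_vec_def)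
  then have "(\<lambda>n. P *v (Q *v x n)) \<longlonglongrightarrow> P *v 0"
    by (rule bounded_linear.tendsto[OF matrix_vector_mul_bounded_linear])
  then show ?thesis
    by (simp add: matrix_vector_mul_assoc assms(1))
qed

theorem mainTheorem13:
  fixes A B :: "complex^'n^'n"
    and v :: "'n \<Rightarrow> complex^'n"
    and lam :: "'n \<Rightarrow> real"
    and \<gamma> :: "'n \<Rightarrow> complex"
    and \<tau> :: real
  assumes tau_pos: "\<tau> > 0"
    and basis: "invertible (\<chi> i j. v j $ i)"
    and eigA: "\<And>i. A *v v i = complex_of_real (lam i) *s v i"
    and eigB: "\<And>i. B *v v i = \<gamma> i *s v i"
    and lam_pos: "\<And>i. lam i > 0"
    and mu_lt: "\<And>i. norm (\<gamma> i / complex_of_real (lam i)) < 1"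
  shows "\<forall>\<theta>. 1/2 < \<theta> \<and> \<theta> \<le> 1 \<longrightarrow> (\<forall>m::nat. m \<ge> 1 \<longrightarrow> theta_stable A B \<theta> \<tau> m)"
proof (intro allI impI)
  fix \<theta> :: real and m :: nat
  assume \<theta>: "1/2 < \<theta> \<and> \<theta> \<le> 1" and m: "m \<ge> 1"
  obtain Q where inverse: "(\<chi> i j. v j $ i) ** Q = mat 1" "Q ** (\<chi> i j. v j $ i) = mat 1"
    using basis unfolding invertible_def by blast
  have dominated: "cmod (\<gamma> i) < lam i" for i
    using mu_lt[of i] lam_pos[of i] by (simp add: norm_divide)
  show "theta_stable A B \<theta> \<tau> m"
    unfolding theta_stable_def
  proof (intro allI impI)
    fix y
    assume "theta_recursion A B \<theta> \<tau> m y"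
    then have "scalar_theta_method (lam i) (\<gamma> i) \<theta> (\<tau> / real m) m (\<lambda>n. (Q *v y n) $ i)" for i
      using tau_pos m \<theta> dominated
      by (intro scalar_theta_method.intro theta_recursion_coordinate
          eigenbasis_coordinate[OF inverse(2,1)]) (auto simp: eigA eigB)
    then show "(\<lambda>n. y (int n)) \<longlonglongrightarrow> 0"
      by (intro tendsto_zero_from_coordinates[OF inverse(1)] scalar_theta_method.c_tendsto_zero)
  qed
qed

end
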